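(* Assume (BC1)–(BC4) and (AC1), and fix $n\in\mathbb{Z}$ such that \[ K_n+J_n+|\mathcal G(n,n+1)|\gamma_n<1, \] where $K_n=\sum_{k<n}|\mathcal G(n,k+1)|\gamma_k\prod_{j=k}^{n-1}\frac{|A_j^{-1}|}{1-\gamma_j|A_j^{-1}|}$ and $J_n=\sum_{k>n}|\mathcal G(n,k+1)|\gamma_k\prod_{j=n}^{k-1}(|A_j|+\gamma_j)$. Then for every $\eta\in Y$ the map $\xi\mapsto H_n(\xi,\eta)$ is $C^1$.
   Context: $X,Y$ Banach spaces; $(A_n)_{n\in\mathbb{Z}}$ bounded invertible operators on $X$; $f_n\colon X\times Y\to X$; $g_n\colon Y\to Y$ homeomorphisms. $y(k,n,\eta)$ solves $y_{k+1}=g_k(y_k)$ with $y(n,n,\eta)=\eta$; $(x_2(k,n,\xi,\eta),y(k,n,\eta))$ solves $x_{k+1}=A_kx_k+f_k(x_k,y_k)$, $y_{k+1}=g_k(y_k)$ with value $(\xi,\eta)$ at $k=n$. $\mathcal A(m,n)=A_{m-1}\cdots A_n$ ($m>n$), $\mathrm{Id}$ ($m=n$), $A_m^{-1}\cdots A_{n-1}^{-1}$ ($m<n$). $(P_n)$ arbitrary bounded operators on $X$; $\mathcal G(m,n)=\mathcal A(m,n)P_n$ for $m\ge n$, $-\mathcal A(m,n)(\mathrm{Id}-P_n)$ for $m<n$. (BC1): $(\mu_n),(\gamma_n)\subset[0,\infty)$ with $|f_n(x,y)|\le\mu_n$, $|f_n(x_1,y)-f_n(x_2,y)|\le\gamma_n|x_1-x_2|$.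 (BC2): $\sup_m\sum_n|\mathcal G(m,n)|\mu_{n-1}<\infty$. (BC3): $\sup_m\sum_n|\mathcal G(m,n)|\gamma_{n-1}<1$. (BC4): $|A_n^{-1}|\gamma_n<1$ for all $n$. (AC1): for a fixed $r\ge1$, $x\mapsto f_n(x,y)$ is $C^r$ for all $n,y$. Under (BC1)–(BC4), with $\bar h_n(\xi,\eta)=-\sum_{k\in\mathbb{Z}}\mathcal G(n,k+1)f_k(x_2(k,n,\xi,\eta),y(k,n,\eta))$ and $\bar H_n(\xi,\eta)=(\xi+\bar h_n(\xi,\eta),\eta)$, it is known that $\bar H_n$ is a homeomorphism of $X\times Y$ whose inverse has the form $H_n(\xi,\eta)=(\xi+h_n(\xi,\eta),\eta)$ with $h_n$ continuous and bounded; $H_n$ maps solutions of $x_{k+1}=A_kx_k$, $y_{k+1}=g_k(y_k)$ to solutions of the coupled system. *)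

theory Defs
  imports "HOL-Analysis.Analysis"
begin

definition bl_invertible :: "('a::real_normed_vector \<Rightarrow>\<^sub>L 'a) \<Rightarrow> bool" where
  "bl_invertible T \<longleftrightarrow> (\<exists>S. T o\<^sub>L S = id_blinfun \<and> S o\<^sub>L T = id_blinfun)"

definition blinv :: "('a::real_normed_vector \<Rightarrow>\<^sub>L 'a) \<Rightarrow> ('a \<Rightarrow>\<^sub>L 'a)" where
  "blinv T = (THE S. T o\<^sub>L S = id_blinfun \<and> S o\<^sub>L T = id_blinfun)"

fun Aprod_fwd :: "(int \<Rightarrow> ('a::real_normed_vector \<Rightarrow>\<^sub>L 'a)) \<Rightarrow> nat \<Rightarrow> int \<Rightarrow> ('a \<Rightarrow>\<^sub>L 'a)" where
  "Aprod_fwd A 0 n = id_blinfun"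
| "Aprod_fwd A (Suc k) n = A (n + int k) o\<^sub>L Aprod_fwd A k n"

fun Aprod_bwd :: "(int \<Rightarrow> ('a::real_normed_vector \<Rightarrow>\<^sub>L 'a)) \<Rightarrow> nat \<Rightarrow> int \<Rightarrow> ('a \<Rightarrow>\<^sub>L 'a)" where
  "Aprod_bwd A 0 n = id_blinfun"
| "Aprod_bwd A (Suc k) n = blinv (A (n - int k - 1)) o\<^sub>L Aprod_bwd A k n"

text \<open>cocycle A m n = A_{m-1}...A_n (m>n), Id (m=n), A_m^{-1}...A_{n-1}^{-1} (m<n)\<close>
definition cocycle :: "(int \<Rightarrow> ('a::real_normed_vector \<Rightarrow>\<^sub>L 'a)) \<Rightarrow> int \<Rightarrow> int \<Rightarrow> ('a \<Rightarrow>\<^sub>L 'a)" where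
  "cocycle A m n = (if n \<le> m then Aprod_fwd A (nat (m - n)) n else Aprod_bwd A (nat (n - m)) n)"

definition green :: "(int \<Rightarrow> ('a::real_normed_vector \<Rightarrow>\<^sub>L 'a)) \<Rightarrow> (int \<Rightarrow> ('a \<Rightarrow>\<^sub>L 'a)) \<Rightarrow> int \<Rightarrow> int \<Rightarrow> ('a \<Rightarrow>\<^sub>L 'a)" where
  "green A P m n = (if n \<le> m then cocycle A m n o\<^sub>L P n
                    else - (cocycle A m n o\<^sub>L (id_blinfun - P n)))"

fun orbit_fwd :: "(int \<Rightarrow> 'c \<Rightarrow> 'c) \<Rightarrow> nat \<Rightarrow> int \<Rightarrow> 'c \<Rightarrow> 'c" where
  "orbit_fwd F 0 n z = z"
| "orbit_fwd F (Suc j) n z = F (n + int j) (orbit_fwd F j n z)"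

fun orbit_bwd :: "(int \<Rightarrow> 'c \<Rightarrow> 'c) \<Rightarrow> nat \<Rightarrow> int \<Rightarrow> 'c \<Rightarrow> 'c" where
  "orbit_bwd F 0 n z = z"
| "orbit_bwd F (Suc j) n z = inv (F (n - int j - 1)) (orbit_bwd F j n z)"

text \<open>orbit F k n z: value at time k of the solution with value z at time n\<close>
definition orbit :: "(int \<Rightarrow> 'c \<Rightarrow> 'c) \<Rightarrow> int \<Rightarrow> int \<Rightarrow> 'c \<Rightarrow> 'c" where
  "orbit F k n z = (if n \<le> k then orbit_fwd F (nat (k - n)) n z else orbit_bwd F (nat (n - k)) n z)"

definition coupled_step ::
  "(int \<Rightarrow> ('a::real_normed_vector \<Rightarrow>\<^sub>L 'a)) \<Rightarrow> (int \<Rightarrow> 'a \<Rightarrow> 'b \<Rightarrow> 'a) \<Rightarrow> (int \<Rightarrow> 'b \<Rightarrow> 'b)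
     \<Rightarrow> int \<Rightarrow> 'a \<times> 'b \<Rightarrow> 'a \<times> 'b" where
  "coupled_step A f g k = (\<lambda>(x, y). (A k x + f k x y, g k y))"

definition ysol :: "(int \<Rightarrow> 'b \<Rightarrow> 'b) \<Rightarrow> int \<Rightarrow> int \<Rightarrow> 'b \<Rightarrow> 'b" where
  "ysol g k n \<eta> = orbit g k n \<eta>"

definition x2sol ::
  "(int \<Rightarrow> ('a::real_normed_vector \<Rightarrow>\<^sub>L 'a)) \<Rightarrow> (int \<Rightarrow> 'a \<Rightarrow> 'b \<Rightarrow> 'a) \<Rightarrow> (int \<Rightarrow> 'b \<Rightarrow> 'b)
     \<Rightarrow> int \<Rightarrow> int \<Rightarrow> 'a \<Rightarrow> 'b \<Rightarrow> 'a" where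
  "x2sol A f g k n \<xi> \<eta> = fst (orbit (coupled_step A f g) k n (\<xi>, \<eta>))"

definition hbar ::
  "(int \<Rightarrow> ('a::banach \<Rightarrow>\<^sub>L 'a)) \<Rightarrow> (int \<Rightarrow> ('a \<Rightarrow>\<^sub>L 'a)) \<Rightarrow> (int \<Rightarrow> 'a \<Rightarrow> 'b \<Rightarrow> 'a)
     \<Rightarrow> (int \<Rightarrow> 'b \<Rightarrow> 'b) \<Rightarrow> int \<Rightarrow> 'a \<times> 'b \<Rightarrow> 'a" where
  "hbar A P f g n = (\<lambda>(\<xi>, \<eta>).
      - (\<Sum>\<^sub>\<infinity>k\<in>(UNIV::int set).
           green A P n (k + 1) (f k (x2sol A f g k n \<xi> \<eta>) (ysol g k n \<eta>))))"

definition Hbar ::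
  "(int \<Rightarrow> ('a::banach \<Rightarrow>\<^sub>L 'a)) \<Rightarrow> (int \<Rightarrow> ('a \<Rightarrow>\<^sub>L 'a)) \<Rightarrow> (int \<Rightarrow> 'a \<Rightarrow> 'b \<Rightarrow> 'a)
     \<Rightarrow> (int \<Rightarrow> 'b \<Rightarrow> 'b) \<Rightarrow> int \<Rightarrow> 'a \<times> 'b \<Rightarrow> 'a \<times> 'b" where
  "Hbar A P f g n = (\<lambda>(\<xi>, \<eta>). (\<xi> + hbar A P f g n (\<xi>, \<eta>), \<eta>))"

definition Hconj ::
  "(int \<Rightarrow> ('a::banach \<Rightarrow>\<^sub>L 'a)) \<Rightarrow> (int \<Rightarrow> ('a \<Rightarrow>\<^sub>L 'a)) \<Rightarrow> (int \<Rightarrow> 'a \<Rightarrow> 'b \<Rightarrow> 'a)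
     \<Rightarrow> (int \<Rightarrow> 'b \<Rightarrow> 'b) \<Rightarrow> int \<Rightarrow> 'a \<times> 'b \<Rightarrow> 'a \<times> 'b" where
  "Hconj A P f g n = inv (Hbar A P f g n)"

definition C1_map :: "('a::real_normed_vector \<Rightarrow> 'c::real_normed_vector) \<Rightarrow> bool" where
  "C1_map F \<longleftrightarrow> (\<exists>D :: 'a \<Rightarrow> ('a \<Rightarrow>\<^sub>L 'c).
      (\<forall>x. (F has_derivative blinfun_apply (D x)) (at x)) \<and> continuous_on UNIV D)"

section \<open>The constants K_n and J_n (extended nonnegative reals, so divergence is +infinity)\<close>

definition Kconst :: "(int \<Rightarrow> ('a::real_normed_vector \<Rightarrow>\<^sub>L 'a)) \<Rightarrow> (int \<Rightarrow> ('a \<Rightarrow>\<^sub>L 'a)) \<Rightarrow> (int \<Rightarrow> real) \<Rightarrow> int \<Rightarrow> ennreal" where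
  "Kconst A P \<gamma> n = (\<Sum>\<^sub>\<infinity>k\<in>{..<n}. ennreal (norm (green A P n (k + 1)) * \<gamma> k *
      (\<Prod>j\<in>{k..<n}. norm (blinv (A j)) / (1 - \<gamma> j * norm (blinv (A j))))))"

definition Jconst :: "(int \<Rightarrow> ('a::real_normed_vector \<Rightarrow>\<^sub>L 'a)) \<Rightarrow> (int \<Rightarrow> ('a \<Rightarrow>\<^sub>L 'a)) \<Rightarrow> (int \<Rightarrow> real) \<Rightarrow> int \<Rightarrow> ennreal" where
  "Jconst A P \<gamma> n = (\<Sum>\<^sub>\<infinity>k\<in>{n<..}. ennreal (norm (green A P n (k + 1)) * \<gamma> k *
      (\<Prod>j\<in>{n..<k}. norm (A j) + \<gamma> j)))"

end

theory Submission
  imports Defs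
begin

text \<open>
  One step x \<mapsto> A_k x + f_k(x, y_k) of the coupled system
  is C^1 with derivative of norm at most |A_k| + gamma_k; by (BC4) it is A_k composed with a contracting
  perturbation of the identity, so its inverse is C^1 with derivative of norm at most
  |A_k^{-1}| / (1 - gamma_k |A_k^{-1}|). Hence xi \<mapsto> x_2(k, n, xi, eta) is C^1 with the products occurring
  in K_n and J_n as derivative bounds, the series defining hbar_n may be differentiated term by term, and
  its derivative has norm at most K_n + J_n + |G(n, n+1)| gamma_n < 1. A C^1 perturbation of the identity
  whose derivative has norm c < 1 is a bijection with C^1 inverse (I + Dh is inverted by the contraction
  principle, and the inverse function theorem applies), and H_n(-, eta) is exactly this inverse.
\<close>

section \<open>Inverses of perturbations of the identity\<close>

lemma blinv_eqI:
  assumes "T o\<^sub>L S = id_blinfun" and "S o\<^sub>L T = id_blinfun"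
  shows "bl_invertible T" and "blinv T = S"
proof -
  show "bl_invertible T" using assms unfolding bl_invertible_def by blast
  have unique: "S' = S" if "T o\<^sub>L S' = id_blinfun \<and> S' o\<^sub>L T = id_blinfun" for S'
  proof -
    have "S' = S' o\<^sub>L (T o\<^sub>L S)" using assms by (intro blinfun_eqI) simp
    also have "\<dots> = (S' o\<^sub>L T) o\<^sub>L S" by (intro blinfun_eqI) simp
    also have "\<dots> = S" using that by (intro blinfun_eqI) simp
    finally show ?thesis .
  qed
  show "blinv T = S" unfolding blinv_def
    by (rule the_equality) (use assms unique in blast)+
qed

lemma blinv_apply:
  assumes "bl_invertible T"
  shows "T (blinv T x) = x" and "blinv T (T x) = x"
proof -
  obtain S where S: "T o\<^sub>L S = id_blinfun" "S o\<^sub>L T = id_blinfun"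
    using assms unfolding bl_invertible_def by blast
  then have "blinv T = S" by (rule blinv_eqI)
  then show "T (blinv T x) = x" "blinv T (T x) = x"
    using arg_cong[OF S(1), of "\<lambda>T. T x"] arg_cong[OF S(2), of "\<lambda>T. T x"] by simp_all
qed

lemma norm_diff_le_perturbed_identity:
  fixes h :: "'a::real_normed_vector \<Rightarrow> 'a"
  assumes lip: "\<And>x y. norm (h x - h y) \<le> c * norm (x - y)"
  shows "(1 - c) * norm (x - y) \<le> norm ((x + h x) - (y + h y))"
proof -
  have "norm (x - y) = norm (((x + h x) - (y + h y)) - (h x - h y))" by (simp add: algebra_simps)
  also have "\<dots> \<le> norm ((x + h x) - (y + h y)) + norm (h x - h y)" by (rule norm_triangle_ineq4)
  also have "\<dots> \<le> norm ((x + h x) - (y + h y)) + c * norm (x - y)" using lip by simp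
  finally show ?thesis by (simp add: algebra_simps)
qed

lemma bij_perturbed_identity:
  fixes h :: "'a::banach \<Rightarrow> 'a"
  assumes "0 \<le> c" "c < 1" and lip: "\<And>x y. norm (h x - h y) \<le> c * norm (x - y)"
  shows "bij (\<lambda>x. x + h x)"
proof (rule bijI)
  show "inj (\<lambda>x. x + h x)"
  proof (rule injI)
    fix x y assume "x + h x = y + h y"
    then show "x = y" using norm_diff_le_perturbed_identity[OF lip, of x y] \<open>c < 1\<close>
      by (simp add: mult_le_0_iff)
  qed
  show "surj (\<lambda>x. x + h x)"
  proof (rule surjI)
    fix z
    have "\<exists>!x. z - h x = x"
      by (rule banach_fix_type[OF assms(1,2)]) (use lip in \<open>simp add: dist_norm norm_minus_commute\<close>)
    then obtain x where "x + h x = z" by (metis diff_add_cancel)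
    then show "(\<lambda>x. x + h x) (SOME x. x + h x = z) = z" by (rule someI)
  qed
qed

lemma inv_perturbed_identity:
  fixes h :: "'a::banach \<Rightarrow> 'a"
  assumes "0 \<le> c" "c < 1" and lip: "\<And>x y. norm (h x - h y) \<le> c * norm (x - y)"
  defines "G \<equiv> inv (\<lambda>x. x + h x)"
  shows "G u + h (G u) = u" and "G (x + h x) = x"
    and "norm (G u - G v) \<le> norm (u - v) / (1 - c)"
proof -
  have bij: "bij (\<lambda>x. x + h x)" by (rule bij_perturbed_identity[OF assms(1-3)])
  show right: "G w + h (G w) = w" for w
    using bij_inv_eq_iff[OF bij] unfolding G_def by metis
  show "G (x + h x) = x"
    using bij_inv_eq_iff[OF bij] unfolding G_def by metis
  show "norm (G u - G v) \<le> norm (u - v) / (1 - c)"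
    using norm_diff_le_perturbed_identity[OF lip, of "G u" "G v"] right[of u] right[of v] \<open>c < 1\<close>
    by (simp add: field_simps)
qed

lemma bl_invertible_id_plus:
  fixes L :: "'a::banach \<Rightarrow>\<^sub>L 'a"
  assumes "norm L \<le> c" "c < 1"
  shows "bl_invertible (id_blinfun + L)" and "norm (blinv (id_blinfun + L)) \<le> 1 / (1 - c)"
proof -
  have "0 \<le> c" using assms(1) norm_ge_zero order_trans by blast
  have lip: "norm (L x - L y) \<le> c * norm (x - y)" for x y
    by (metis blinfun.diff_right assms(1) mult_right_mono norm_blinfun norm_ge_zero order_trans)
  define G where "G = inv (\<lambda>x. x + L x)"
  note G = inv_perturbed_identity[OF \<open>0 \<le> c\<close> assms(2) lip, folded G_def]
  have G0: "G 0 = 0" using G(2)[of 0] by simp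
  have "G (u + v) = G ((G u + G v) + L (G u + G v))" for u v
    using G(1)[of u] G(1)[of v] by (simp add: blinfun.add_right algebra_simps)
  then have add: "G (u + v) = G u + G v" for u v using G(2) by simp
  have "G (r *\<^sub>R u) = G (r *\<^sub>R G u + L (r *\<^sub>R G u))" for r u
    using G(1)[of u] by (simp add: blinfun.scaleR_right flip: scaleR_right_distrib)
  then have scale: "G (r *\<^sub>R u) = r *\<^sub>R G u" for r u using G(2) by simp
  have bound: "norm (G u) \<le> norm u * (1 / (1 - c))" for u
    using G(3)[of u 0] G0 by simp
  define S where "S = Blinfun G"
  have S: "blinfun_apply S = G"
    unfolding S_def by (rule bounded_linear_Blinfun_apply[OF bounded_linear_intro[OF add scale bound]])
  have "(id_blinfun + L) o\<^sub>L S = id_blinfun" "S o\<^sub>L (id_blinfun + L) = id_blinfun"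
    by (rule blinfun_eqI; simp add: S blinfun.add_left G(1,2))+
  note inverse = blinv_eqI[OF this]
  show "bl_invertible (id_blinfun + L)" by (rule inverse(1))
  show "norm (blinv (id_blinfun + L)) \<le> 1 / (1 - c)"
    unfolding inverse(2)
  proof (rule norm_blinfun_bound)
    show "0 \<le> 1 / (1 - c)" using assms(2) by simp
    show "norm (S x) \<le> 1 / (1 - c) * norm x" for x using bound[of x] by (simp add: S mult.commute)
  qed
qed

lemma lipschitz_blinv_id_plus:
  fixes L1 L2 :: "'a::banach \<Rightarrow>\<^sub>L 'a"
  assumes "norm L1 \<le> c" "norm L2 \<le> c" "c < 1"
  shows "norm (blinv (id_blinfun + L1) - blinv (id_blinfun + L2)) \<le> (1 / (1 - c))\<^sup>2 * norm (L1 - L2)"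
proof -
  define S1 where "S1 = blinv (id_blinfun + L1)"
  define S2 where "S2 = blinv (id_blinfun + L2)"
  note I1 = bl_invertible_id_plus[OF assms(1,3), folded S1_def]
  note I2 = bl_invertible_id_plus[OF assms(2,3), folded S2_def]
  \<comment> \<open>resolvent identity\<close>
  have "S1 - S2 = S1 o\<^sub>L (L2 - L1) o\<^sub>L S2"
  proof (rule blinfun_eqI)
    fix v
    have "S1 (S2 v + L1 (S2 v)) = S2 v"
      using blinv_apply(2)[OF I1(1), of "S2 v"] by (simp add: S1_def blinfun.add_left)
    moreover have "S2 v + L2 (S2 v) = v"
      using blinv_apply(1)[OF I2(1), of v] by (simp add: S2_def blinfun.add_left)
    ultimately have "S1 v - S2 v = S1 (S2 v + L2 (S2 v)) - S1 (S2 v + L1 (S2 v))" by simp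
    then show "(S1 - S2) v = (S1 o\<^sub>L (L2 - L1) o\<^sub>L S2) v"
      by (simp add: blinfun.diff_left blinfun.diff_right blinfun.add_right)
  qed
  then have "norm (S1 - S2) \<le> norm (S1 o\<^sub>L (L2 - L1)) * norm S2"
    by (simp only: norm_blinfun_compose)
  also have "\<dots> \<le> norm S1 * norm (L2 - L1) * norm S2"
    by (intro mult_right_mono norm_blinfun_compose norm_ge_zero)
  also have "\<dots> \<le> (1 / (1 - c)) * norm (L2 - L1) * (1 / (1 - c))"
    using I1(2) I2(2) assms by (intro mult_mono) auto
  finally show ?thesis unfolding S1_def S2_def by (simp add: power2_eq_square norm_minus_commute mult_ac)
qed

section \<open>C^1 maps with bounded derivative\<close>

definition C1_bounded :: "('a::real_normed_vector \<Rightarrow> 'b::real_normed_vector) \<Rightarrow> real \<Rightarrow> bool" where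
  "C1_bounded F c \<longleftrightarrow> (\<exists>D :: 'a \<Rightarrow> ('a \<Rightarrow>\<^sub>L 'b).
      (\<forall>x. (F has_derivative blinfun_apply (D x)) (at x)) \<and> continuous_on UNIV D \<and> (\<forall>x. norm (D x) \<le> c))"

lemma C1_bounded_imp_C1_map: "C1_bounded F c \<Longrightarrow> C1_map F"
  unfolding C1_bounded_def C1_map_def by blast

lemma C1_bounded_nonneg:
  fixes F :: "'a::real_normed_vector \<Rightarrow> 'b::real_normed_vector"
  assumes "C1_bounded F c"
  shows "0 \<le> c"
proof -
  obtain D :: "'a \<Rightarrow> 'a \<Rightarrow>\<^sub>L 'b" where "\<And>x. norm (D x) \<le> c" using assms unfolding C1_bounded_def by blast
  then show ?thesis by (meson norm_ge_zero order_trans)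
qed

lemma C1_bounded_mono:
  assumes "C1_bounded F c" and "c \<le> d"
  shows "C1_bounded F d"
  using assms(1) order_trans[OF _ assms(2)] unfolding C1_bounded_def by blast

lemma C1_bounded_continuous_on:
  fixes F :: "'a::real_normed_vector \<Rightarrow> 'b::real_normed_vector"
  assumes "C1_bounded F c"
  shows "continuous_on UNIV F"
proof -
  obtain D :: "'a \<Rightarrow> 'a \<Rightarrow>\<^sub>L 'b" where "\<And>x. (F has_derivative blinfun_apply (D x)) (at x)"
    using assms unfolding C1_bounded_def by blast
  then show ?thesis by (intro continuous_at_imp_continuous_on ballI has_derivative_continuous)
qed

lemma C1_bounded_lipschitz:
  fixes F :: "'a::real_normed_vector \<Rightarrow> 'b::real_normed_vector"
  assumes "C1_bounded F c"
  shows "norm (F x - F y) \<le> c * norm (x - y)"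
proof -
  obtain D :: "'a \<Rightarrow> 'a \<Rightarrow>\<^sub>L 'b" where D: "\<And>x. (F has_derivative blinfun_apply (D x)) (at x)" "\<And>x. norm (D x) \<le> c"
    using assms unfolding C1_bounded_def by blast
  show ?thesis
    by (rule differentiable_bound[where S=UNIV and f'="\<lambda>x. blinfun_apply (D x)"])
      (use D in \<open>auto simp flip: norm_blinfun.rep_eq\<close>)
qed

lemma has_derivative_norm_le_lipschitz:
  fixes F :: "'a::real_normed_vector \<Rightarrow> 'b::real_normed_vector"
  assumes deriv: "(F has_derivative blinfun_apply D) (at x)"
    and lip: "\<And>x1 x2. norm (F x1 - F x2) \<le> L * norm (x1 - x2)" and "0 \<le> L"
  shows "norm D \<le> L"
proof (rule norm_blinfun_bound[OF \<open>0 \<le> L\<close>])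
  fix v
  show "norm (D v) \<le> L * norm v"
  proof (cases "v = 0")
    case True
    then show ?thesis by (simp add: blinfun.zero_right)
  next
    case False
    \<comment> \<open>compare D with the difference quotient of F in direction v, taken at a small scale t\<close>
    have approx: "norm (D v) \<le> L * norm v + e * norm v" if "e > 0" for e
    proof -
      obtain d where "d > 0"
        and d: "\<And>y. norm (y - x) < d \<Longrightarrow> norm (F y - F x - D (y - x)) \<le> e * norm (y - x)"
        using deriv \<open>e > 0\<close> unfolding has_derivative_at_alt by blast
      define t where "t = d / (2 * norm v)"
      have "t > 0" and "norm (t *\<^sub>R v) < d" using \<open>d > 0\<close> False by (simp_all add: t_def)
      have "norm (D (t *\<^sub>R v)) \<le> norm (F (x + t *\<^sub>R v) - F x) + norm (F (x + t *\<^sub>R v) - F x - D (t *\<^sub>R v))"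
        using norm_triangle_sub[of "D (t *\<^sub>R v)" "F (x + t *\<^sub>R v) - F x"]
          norm_minus_commute[of "D (t *\<^sub>R v)" "F (x + t *\<^sub>R v) - F x"] by linarith
      also have "\<dots> \<le> L * norm (t *\<^sub>R v) + e * norm (t *\<^sub>R v)"
        using lip[of "x + t *\<^sub>R v" x] d[of "x + t *\<^sub>R v"] \<open>norm (t *\<^sub>R v) < d\<close> by (intro add_mono) simp_all
      finally have "t * norm (D v) \<le> t * (L * norm v + e * norm v)"
        using \<open>t > 0\<close> by (simp add: blinfun.scaleR_right algebra_simps)
      then show ?thesis using \<open>t > 0\<close> by (rule mult_left_le_imp_le)
    qed
    show ?thesis
    proof (rule field_le_epsilon)
      fix e :: real assume "e > 0"
      then show "norm (D v) \<le> L * norm v + e"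
        using approx[of "e / norm v"] False by simp
    qed
  qed
qed

lemma C1_bounded_if_lipschitz:
  assumes "C1_map F" and lip: "\<And>x y. norm (F x - F y) \<le> L * norm (x - y)" and "0 \<le> L"
  shows "C1_bounded F L"
  using assms(1) has_derivative_norm_le_lipschitz[OF _ lip \<open>0 \<le> L\<close>]
  unfolding C1_map_def C1_bounded_def by blast

lemma C1_bounded_blinfun: "C1_bounded (blinfun_apply T) (norm T)"
  unfolding C1_bounded_def
  by (intro exI[of _ "\<lambda>_. T"]) (auto intro: bounded_linear_imp_has_derivative blinfun.bounded_linear_right)

lemma C1_bounded_compose:
  assumes "C1_bounded F c" and "C1_bounded X d"
  shows "C1_bounded (\<lambda>x. F (X x)) (c * d)"
proof -
  obtain DF where dF: "\<And>x. (F has_derivative blinfun_apply (DF x)) (at x)"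
    and cF: "continuous_on UNIV DF" and nF: "\<And>x. norm (DF x) \<le> c"
    using assms(1) unfolding C1_bounded_def by blast
  obtain DX where dX: "\<And>x. (X has_derivative blinfun_apply (DX x)) (at x)"
    and cX: "continuous_on UNIV DX" and nX: "\<And>x. norm (DX x) \<le> d"
    using assms(2) unfolding C1_bounded_def by blast
  have "continuous_on UNIV (\<lambda>x. DF (X x))"
    using continuous_on_compose2[OF cF C1_bounded_continuous_on[OF assms(2)]] by simp
  moreover have "norm (DF (X x) o\<^sub>L DX x) \<le> c * d" for x
  proof -
    have "norm (DF (X x) o\<^sub>L DX x) \<le> norm (DF (X x)) * norm (DX x)" by (rule norm_blinfun_compose)
    also have "\<dots> \<le> c * d" using nF nX C1_bounded_nonneg[OF assms(1)] by (intro mult_mono) auto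
    finally show ?thesis .
  qed
  moreover have "((\<lambda>x. F (X x)) has_derivative blinfun_apply (DF (X x) o\<^sub>L DX x)) (at x)" for x
  proof -
    have "blinfun_apply (DF (X x) o\<^sub>L DX x) = (\<lambda>v. DF (X x) (DX x v))" by (rule ext) simp
    then show ?thesis using has_derivative_compose[OF dX dF] by simp
  qed
  ultimately show ?thesis
    unfolding C1_bounded_def using cX
    by (intro exI[of _ "\<lambda>x. DF (X x) o\<^sub>L DX x"]) (auto intro!: continuous_intros)
qed

lemma C1_bounded_add:
  assumes "C1_bounded F c" and "C1_bounded G d"
  shows "C1_bounded (\<lambda>x. F x + G x) (c + d)"
proof -
  obtain DF where "\<And>x. (F has_derivative blinfun_apply (DF x)) (at x)"
    and "continuous_on UNIV DF" and nF: "\<And>x. norm (DF x) \<le> c"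
    using assms(1) unfolding C1_bounded_def by blast
  moreover obtain DG where "\<And>x. (G has_derivative blinfun_apply (DG x)) (at x)"
    and "continuous_on UNIV DG" and nG: "\<And>x. norm (DG x) \<le> d"
    using assms(2) unfolding C1_bounded_def by blast
  moreover have "norm (DF x + DG x) \<le> c + d" for x
    using norm_triangle_ineq[of "DF x" "DG x"] nF[of x] nG[of x] by linarith
  moreover have "blinfun_apply (DF x + DG x) = (\<lambda>v. DF x v + DG x v)" for x
    by (rule ext) (simp add: blinfun.add_left)
  ultimately show ?thesis
    unfolding C1_bounded_def
    by (intro exI[of _ "\<lambda>x. DF x + DG x"]) (auto intro!: continuous_intros has_derivative_add)
qed

lemma C1_bounded_uminus:
  assumes "C1_bounded F c"
  shows "C1_bounded (\<lambda>x. - F x) c"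
proof -
  obtain D where "\<And>x. (F has_derivative blinfun_apply (D x)) (at x)"
    and "continuous_on UNIV D" and "\<And>x. norm (D x) \<le> c"
    using assms unfolding C1_bounded_def by blast
  moreover have "blinfun_apply (- D x) = (\<lambda>v. - D x v)" for x
    by (rule ext) (simp add: blinfun.minus_left)
  ultimately show ?thesis
    unfolding C1_bounded_def
    by (intro exI[of _ "\<lambda>x. - D x"]) (auto intro!: continuous_intros has_derivative_minus)
qed

lemma C1_bounded_inv_perturbed_identity:
  fixes h :: "'a::banach \<Rightarrow> 'a"
  assumes "c < 1" and "C1_bounded h c"
  shows "C1_bounded (inv (\<lambda>x. x + h x)) (1 / (1 - c))"
proof -
  obtain Dh where dh: "\<And>x. (h has_derivative blinfun_apply (Dh x)) (at x)"
    and cDh: "continuous_on UNIV Dh" and nDh: "\<And>x. norm (Dh x) \<le> c"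
    using assms(2) unfolding C1_bounded_def by blast
  define G where "G = inv (\<lambda>x. x + h x)"
  note G = inv_perturbed_identity[OF C1_bounded_nonneg[OF assms(2)] assms(1)
      C1_bounded_lipschitz[OF assms(2)], folded G_def]
  have "(1 / (1 - c))-lipschitz_on UNIV G"
    by (rule lipschitz_onI) (use G(3) assms(1) in \<open>auto simp: dist_norm\<close>)
  then have cG: "continuous_on UNIV G" by (rule lipschitz_on_continuous_on)
  define DG where "DG z = blinv (id_blinfun + Dh (G z))" for z
  note inv_bound = bl_invertible_id_plus[OF nDh assms(1)]
  \<comment> \<open>inverse function theorem for the bijection id + h, whose inverse G is already known to be continuous\<close>
  have "(G has_derivative blinfun_apply (DG z)) (at z)" for z
  proof (rule has_derivative_inverse_basic[where f="\<lambda>x. x + h x" and T=UNIV])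
    show "((\<lambda>x. x + h x) has_derivative (\<lambda>v. v + Dh (G z) v)) (at (G z))"
      by (rule has_derivative_add[OF has_derivative_ident dh])
    show "blinfun_apply (DG z) \<circ> (\<lambda>v. v + Dh (G z) v) = id"
      using blinv_apply(2)[OF inv_bound(1)] by (auto simp: DG_def blinfun.add_left)
  qed (use G cG in \<open>auto simp: continuous_on_eq_continuous_at blinfun.bounded_linear_right\<close>)
  moreover have "continuous_on UNIV DG"
  proof -
    have "((1 / (1 - c))\<^sup>2)-lipschitz_on {L. norm L \<le> c} (\<lambda>L::'a\<Rightarrow>\<^sub>L'a. blinv (id_blinfun + L))"
      by (rule lipschitz_onI) (use lipschitz_blinv_id_plus assms(1) in \<open>auto simp: dist_norm\<close>)
    then have "continuous_on {L. norm L \<le> c} (\<lambda>L::'a\<Rightarrow>\<^sub>L'a. blinv (id_blinfun + L))"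
      by (rule lipschitz_on_continuous_on)
    moreover have "continuous_on UNIV (\<lambda>z. Dh (G z))"
      by (rule continuous_on_compose2[OF cDh cG]) auto
    ultimately show ?thesis
      unfolding DG_def by (rule continuous_on_compose2) (use nDh in auto)
  qed
  ultimately show ?thesis
    unfolding C1_bounded_def G_def[symmetric] using inv_bound(2)
    by (intro exI[of _ DG]) (auto simp: DG_def)
qed

section \<open>Series indexed by the integers\<close>

lemma ennreal_infsum_lt_top:
  fixes f :: "'i \<Rightarrow> real"
  assumes nonneg: "\<And>x. 0 \<le> f x" and finite: "(\<Sum>\<^sub>\<infinity>x\<in>A. ennreal (f x)) < top"
  shows "f summable_on A" and "ennreal (infsum f A) = (\<Sum>\<^sub>\<infinity>x\<in>A. ennreal (f x))"
proof -
  have SUP_eq: "(\<Sum>\<^sub>\<infinity>x\<in>A. ennreal (f x)) = (SUP F\<in>{F. finite F \<and> F \<subseteq> A}. ennreal (sum f F))"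
    using nonneg by (subst nonneg_infsum_complete) (auto simp: sum_ennreal)
  show summable: "f summable_on A"
  proof (rule nonneg_bdd_above_summable_on)
    show "bdd_above (sum f ` {F. F \<subseteq> A \<and> finite F})"
    proof (rule bdd_aboveI2)
      fix F assume "F \<in> {F. F \<subseteq> A \<and> finite F}"
      then have "F \<in> {F. finite F \<and> F \<subseteq> A}" by blast
      then have "ennreal (sum f F) \<le> (\<Sum>\<^sub>\<infinity>x\<in>A. ennreal (f x))"
        unfolding SUP_eq by (rule SUP_upper)
      then show "sum f F \<le> enn2real (\<Sum>\<^sub>\<infinity>x\<in>A. ennreal (f x))"
        using finite by (metis enn2real_ennreal enn2real_mono less_top sum_nonneg nonneg)
    qed
  qed (use nonneg in simp)
  show "ennreal (infsum f A) = (\<Sum>\<^sub>\<infinity>x\<in>A. ennreal (f x))"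
    unfolding SUP_eq by (rule infsum_nonneg_is_SUPREMUM_ennreal[OF summable]) (use nonneg in auto)
qed

lemma tendsto_sum_symmetric_int:
  fixes f :: "int \<Rightarrow> 'c::{topological_comm_monoid_add, t2_space}"
  assumes "f summable_on UNIV"
  shows "(\<lambda>N. sum f {-int N..int N}) \<longlonglongrightarrow> infsum f UNIV"
proof -
  have "filterlim (\<lambda>N::nat. {-int N..int N}) (finite_subsets_at_top UNIV) sequentially"
    unfolding filterlim_finite_subsets_at_top
  proof (intro allI impI)
    fix X :: "int set" assume "finite X \<and> X \<subseteq> UNIV"
    then obtain M where M: "\<And>x. x \<in> X \<Longrightarrow> \<bar>x\<bar> \<le> M"
      by (metis finite_nat_set_iff_bounded_le finite_imageI abs_ge_zero imageI nat_le_iff)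
    show "\<forall>\<^sub>F N in sequentially. finite {-int N..int N} \<and> X \<subseteq> {-int N..int N} \<and> {-int N..int N} \<subseteq> UNIV"
      unfolding eventually_sequentially
    proof (intro exI[of _ "nat M"] allI impI)
      fix N assume "nat M \<le> N"
      then show "finite {-int N..int N} \<and> X \<subseteq> {-int N..int N} \<and> {-int N..int N} \<subseteq> UNIV"
        using M by force
    qed
  qed
  moreover have "(sum f \<longlongrightarrow> infsum f UNIV) (finite_subsets_at_top UNIV)"
    using has_sum_infsum[OF assms] unfolding has_sum_def .
  ultimately show ?thesis by (rule filterlim_compose[rotated])
qed

lemma summable_on_norm_bound:
  fixes u :: "'i \<Rightarrow> 'c::banach"
  assumes "\<And>k. norm (u k) \<le> b k" and "b summable_on UNIV"
  shows "u summable_on A"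
  by (rule abs_summable_summable, rule summable_on_comparison_test[where f=b])
    (use assms summable_on_subset_banach[OF assms(2)] in auto)

lemma norm_infsum_diff_sum_le:
  fixes u :: "'i \<Rightarrow> 'c::banach"
  assumes bound: "\<And>k. norm (u k) \<le> b k" and "b summable_on UNIV" and "finite F"
  shows "norm (infsum u UNIV - sum u F) \<le> infsum b UNIV - sum b F"
proof -
  have b_summable: "b summable_on A" for A
    by (rule summable_on_subset_banach[OF assms(2)]) simp
  have u_summable: "u summable_on A" for A
    by (rule summable_on_norm_bound[OF bound assms(2)])
  have "infsum u UNIV = infsum u F + infsum u (UNIV - F)"
    using infsum_Un_disjoint[OF u_summable u_summable, of F "UNIV - F"] by simp
  moreover have "infsum b UNIV = infsum b F + infsum b (UNIV - F)"
    using infsum_Un_disjoint[OF b_summable b_summable, of F "UNIV - F"] by simp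
  moreover have "norm (infsum u (UNIV - F)) \<le> infsum b (UNIV - F)"
    by (rule norm_infsum_le[OF has_sum_infsum[OF u_summable] has_sum_infsum[OF b_summable]])
      (use bound in auto)
  ultimately show ?thesis
    using \<open>finite F\<close> by simp
qed

lemma C1_bounded_infsum:
  fixes t :: "int \<Rightarrow> 'a::banach \<Rightarrow> 'c::banach"
  assumes C1: "\<And>k. C1_bounded (t k) (b k)" and "b summable_on UNIV"
    and bound: "\<And>k x. norm (t k x) \<le> M k" and "M summable_on UNIV"
  shows "C1_bounded (\<lambda>x. \<Sum>\<^sub>\<infinity>k. t k x) (\<Sum>\<^sub>\<infinity>k. b k)"
proof -
  have "\<forall>k. \<exists>D :: 'a \<Rightarrow> 'a \<Rightarrow>\<^sub>L 'c. (\<forall>x. (t k has_derivative blinfun_apply (D x)) (at x))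
      \<and> continuous_on UNIV D \<and> (\<forall>x. norm (D x) \<le> b k)"
    using C1 unfolding C1_bounded_def by blast
  then obtain Dt where deriv: "\<And>k x. (t k has_derivative blinfun_apply (Dt k x)) (at x)"
    and cont: "\<And>k. continuous_on UNIV (Dt k)" and Dt_bound: "\<And>k x. norm (Dt k x) \<le> b k"
    by metis
  define I where "I N = {-int N..int N}" for N
  define D where "D x = (\<Sum>\<^sub>\<infinity>k. Dt k x)" for x
  have tail: "norm (D x - sum (\<lambda>k. Dt k x) (I N)) \<le> infsum b UNIV - sum b (I N)" for x N
    unfolding D_def I_def by (rule norm_infsum_diff_sum_le[OF Dt_bound \<open>b summable_on UNIV\<close>]) simp
  \<comment> \<open>the partial sums of the derivatives converge uniformly, with the tails of the majorant\<close>
  have uniform: "\<forall>\<^sub>F N in sequentially. \<forall>x. norm (D x - sum (\<lambda>k. Dt k x) (I N)) < e" if "e > 0" for e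
  proof -
    have "\<forall>\<^sub>F N in sequentially. dist (sum b (I N)) (infsum b UNIV) < e"
      using tendsto_sum_symmetric_int[OF \<open>b summable_on UNIV\<close>] \<open>e > 0\<close> unfolding I_def by (rule tendstoD)
    then show ?thesis
    proof eventually_elim
      case (elim N)
      have "infsum b UNIV - sum b (I N) < e" using elim by (simp add: dist_real_def abs_less_iff)
      then show ?case using tail[of _ N] by (meson le_less_trans)
    qed
  qed
  have partial_sums: "(\<lambda>N. sum (\<lambda>k. t k x) (I N)) \<longlonglongrightarrow> (\<Sum>\<^sub>\<infinity>k. t k x)" for x
    unfolding I_def
    by (rule tendsto_sum_symmetric_int[OF summable_on_norm_bound[OF bound \<open>M summable_on UNIV\<close>]])
  have "\<exists>g. \<forall>x\<in>UNIV. (\<lambda>N. sum (\<lambda>k. t k x) (I N)) \<longlonglongrightarrow> g x \<and> (g has_derivative blinfun_apply (D x)) (at x within UNIV)"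
  proof (rule has_derivative_sequence[where f'="\<lambda>N x v. sum (\<lambda>k. Dt k x v) (I N)" and ?x0.0=0])
    show "((\<lambda>x. sum (\<lambda>k. t k x) (I N)) has_derivative (\<lambda>v. sum (\<lambda>k. Dt k x v) (I N))) (at x within UNIV)" for N x
      using deriv by (auto intro!: has_derivative_sum)
    show "\<forall>\<^sub>F N in sequentially. \<forall>x\<in>UNIV. \<forall>v. norm (sum (\<lambda>k. Dt k x v) (I N) - D x v) \<le> e * norm v"
      if "e > 0" for e
      using uniform[OF \<open>e > 0\<close>]
    proof eventually_elim
      case (elim N)
      have "norm (sum (\<lambda>k. Dt k x v) (I N) - D x v) \<le> norm (D x - sum (\<lambda>k. Dt k x) (I N)) * norm v" for x v
        by (metis blinfun.diff_left blinfun.sum_left norm_blinfun norm_minus_commute)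
      then show ?case using elim by (meson less_imp_le mult_right_mono norm_ge_zero order_trans)
    qed
  qed (use partial_sums in simp_all)
  then obtain g where g: "\<And>x. (\<lambda>N. sum (\<lambda>k. t k x) (I N)) \<longlonglongrightarrow> g x"
    "\<And>x. (g has_derivative blinfun_apply (D x)) (at x)" by auto
  have "g = (\<lambda>x. \<Sum>\<^sub>\<infinity>k. t k x)"
    using LIMSEQ_unique[OF g(1) partial_sums] by auto
  then have "((\<lambda>x. \<Sum>\<^sub>\<infinity>k. t k x) has_derivative blinfun_apply (D x)) (at x)" for x
    using g(2) by simp
  moreover have "continuous_on UNIV D"
  proof (rule uniform_limit_theorem[where f="\<lambda>N x. sum (\<lambda>k. Dt k x) (I N)" and F=sequentially])
    show "\<forall>\<^sub>F N in sequentially. continuous_on UNIV (\<lambda>x. sum (\<lambda>k. Dt k x) (I N))"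
      using cont by (intro always_eventually allI continuous_on_sum) auto
    show "uniform_limit UNIV (\<lambda>N x. sum (\<lambda>k. Dt k x) (I N)) D sequentially"
      unfolding uniform_limit_iff using uniform by (simp add: dist_norm norm_minus_commute)
  qed simp
  moreover have "norm (D x) \<le> (\<Sum>\<^sub>\<infinity>k. b k)" for x
    unfolding D_def
    by (rule norm_infsum_le[OF has_sum_infsum[OF summable_on_norm_bound[OF Dt_bound]]
          has_sum_infsum]) (use Dt_bound \<open>b summable_on UNIV\<close> in auto)
  ultimately show ?thesis unfolding C1_bounded_def by blast
qed

section \<open>Orbits and the coupled system\<close>

lemma orbit_same: "orbit F n n z = z"
  by (simp add: orbit_def)

lemma orbit_step:
  assumes "\<And>k. bij (F k)"
  shows "orbit F (k + 1) n z = F k (orbit F k n z)"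
proof (cases "n \<le> k")
  case True
  then have "nat (k + 1 - n) = Suc (nat (k - n))" by simp
  with \<open>n \<le> k\<close> show ?thesis by (simp add: orbit_def)
next
  case False
  then have "nat (n - k) = Suc (nat (n - (k + 1)))" by simp
  with \<open>\<not> n \<le> k\<close> have "orbit F k n z = inv (F k) (orbit F (k + 1) n z)"
    by (auto simp: orbit_def)
  then show ?thesis using assms[of k] by (simp add: bij_is_surj surj_f_inv_f)
qed

lemma orbit_unique:
  assumes "\<And>k. inj (F k)"
    and u: "\<And>k. u (k + 1) = F k (u k)" and v: "\<And>k. v (k + 1) = F k (v k)"
    and "u n = v (n::int)"
  shows "u k = v k"
proof (induction k rule: int_induct[where k=n])
  case (step2 i)
  have "F (i - 1) (u (i - 1)) = F (i - 1) (v (i - 1))"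
    using u[of "i - 1"] v[of "i - 1"] step2.IH by simp
  then show ?case using assms(1) by (simp add: inj_eq)
qed (use assms in simp_all)

lemma bij_if_homeomorphism:
  assumes "homeomorphism UNIV UNIV g g'"
  shows "bij g"
proof -
  have "\<And>x. g' (g x) = x" "\<And>y. g (g' y) = y" using assms unfolding homeomorphism_def by auto
  then show ?thesis by (metis bijI injI surjI)
qed

locale coupled_system =
  fixes A :: "int \<Rightarrow> ('a::banach \<Rightarrow>\<^sub>L 'a)"
    and f :: "int \<Rightarrow> 'a \<Rightarrow> 'b \<Rightarrow> 'a"
    and g :: "int \<Rightarrow> 'b \<Rightarrow> 'b"
    and \<gamma> :: "int \<Rightarrow> real"
  assumes A_invertible: "\<And>k. bl_invertible (A k)"
    and g_bij: "\<And>k. bij (g k)"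
    and \<gamma>_nonneg: "\<And>k. 0 \<le> \<gamma> k"
    and f_lipschitz: "\<And>k x1 x2 y. norm (f k x1 y - f k x2 y) \<le> \<gamma> k * norm (x1 - x2)"
    and f_C1: "\<And>k y. C1_map (\<lambda>x. f k x y)"
    and inv_A_\<gamma>_less_1: "\<And>k. norm (blinv (A k)) * \<gamma> k < 1"
begin

definition step :: "int \<Rightarrow> 'b \<Rightarrow> 'a \<Rightarrow> 'a" where
  "step k y = (\<lambda>x. A k x + f k x y)"

lemma C1_bounded_f: "C1_bounded (\<lambda>x. f k x y) (\<gamma> k)"
  by (rule C1_bounded_if_lipschitz[OF f_C1 f_lipschitz \<gamma>_nonneg])

lemma C1_bounded_step: "C1_bounded (step k y) (norm (A k) + \<gamma> k)"
  unfolding step_def by (rule C1_bounded_add[OF C1_bounded_blinfun C1_bounded_f])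

lemma C1_bounded_inv_A_f: "C1_bounded (\<lambda>x. blinv (A k) (f k x y)) (norm (blinv (A k)) * \<gamma> k)"
  by (rule C1_bounded_compose[OF C1_bounded_blinfun C1_bounded_f])

lemma step_eq_A_perturbed_identity:
  "step k y = blinfun_apply (A k) \<circ> (\<lambda>x. x + blinv (A k) (f k x y))"
  by (simp add: step_def fun_eq_iff blinfun.add_right blinv_apply A_invertible)

lemma bij_inv_A_perturbed_identity: "bij (\<lambda>x. x + blinv (A k) (f k x y))"
  using \<gamma>_nonneg
  by (intro bij_perturbed_identity[OF _ inv_A_\<gamma>_less_1 C1_bounded_lipschitz[OF C1_bounded_inv_A_f]]) simp

lemma bij_step: "bij (step k y)"
proof -
  note bij_inv_A_perturbed_identity
  moreover have "bij (blinfun_apply (A k))"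
    using blinv_apply[OF A_invertible] by (metis bijI injI surjI)
  ultimately show ?thesis
    unfolding step_eq_A_perturbed_identity by (rule bij_comp)
qed

lemma C1_bounded_inv_step:
  "C1_bounded (inv (step k y)) (norm (blinv (A k)) / (1 - \<gamma> k * norm (blinv (A k))))"
proof -
  define G where "G = inv (\<lambda>x. x + blinv (A k) (f k x y))"
  have "G z + blinv (A k) (f k (G z) y) = z" for z
    unfolding G_def using surj_f_inv_f[OF bij_is_surj[OF bij_inv_A_perturbed_identity[of k y]], of z] by simp
  then have "step k y (G (blinv (A k) z)) = z" for z
    by (simp add: step_eq_A_perturbed_identity blinv_apply A_invertible)
  then have "inv (step k y) = (\<lambda>z. G (blinv (A k) z))"
    using bij_step by (metis bij_is_inj inv_f_eq ext)
  moreover have "C1_bounded (\<lambda>z. G (blinv (A k) z)) (1 / (1 - norm (blinv (A k)) * \<gamma> k) * norm (blinv (A k)))"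
    unfolding G_def
    by (rule C1_bounded_compose[OF C1_bounded_inv_perturbed_identity[OF inv_A_\<gamma>_less_1 C1_bounded_inv_A_f]
          C1_bounded_blinfun])
  ultimately show ?thesis by (simp add: mult.commute)
qed

lemma bij_coupled_step: "bij (coupled_step A f g k)"
proof (rule bijI)
  show "inj (coupled_step A f g k)"
  proof (rule injI)
    fix p q assume eq: "coupled_step A f g k p = coupled_step A f g k q"
    obtain x y x' y' where pq: "p = (x, y)" "q = (x', y')" by fastforce
    from eq have "g k y = g k y'" by (simp add: coupled_step_def pq)
    then have "y = y'" using g_bij[of k] by (simp add: bij_is_inj inj_eq)
    with eq have "step k y x = step k y x'" by (simp add: coupled_step_def step_def pq)
    then have "x = x'" using bij_step by (simp add: bij_is_inj inj_eq)
    with \<open>y = y'\<close> show "p = q" by (simp add: pq)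
  qed
  show "surj (coupled_step A f g k)"
  proof (rule surjI)
    fix pq :: "'a \<times> 'b"
    obtain u v where pq: "pq = (u, v)" by fastforce
    obtain y where y: "g k y = v" using g_bij[of k] unfolding bij_def surj_def by metis
    obtain x where x: "step k y x = u" using bij_step[of k y] unfolding bij_def surj_def by metis
    have "coupled_step A f g k (x, y) = pq" using x y by (simp add: coupled_step_def step_def pq)
    then show "coupled_step A f g k (SOME p. coupled_step A f g k p = pq) = pq" by (rule someI)
  qed
qed

lemma snd_orbit_coupled_step: "snd (orbit (coupled_step A f g) k n (\<xi>, \<eta>)) = ysol g k n \<eta>"
proof (rule orbit_unique[where F=g and n=n and u="\<lambda>k. snd (orbit (coupled_step A f g) k n (\<xi>, \<eta>))"
      and v="\<lambda>k. ysol g k n \<eta>"])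
  show "inj (g k)" for k using g_bij bij_is_inj by blast
  show "snd (orbit (coupled_step A f g) (k + 1) n (\<xi>, \<eta>)) = g k (snd (orbit (coupled_step A f g) k n (\<xi>, \<eta>)))" for k
  proof -
    obtain x y where xy: "orbit (coupled_step A f g) k n (\<xi>, \<eta>) = (x, y)" by fastforce
    show ?thesis unfolding orbit_step[OF bij_coupled_step] xy by (simp add: coupled_step_def)
  qed
  show "ysol g (k + 1) n \<eta> = g k (ysol g k n \<eta>)" for k
    unfolding ysol_def by (rule orbit_step[OF g_bij])
qed (simp add: orbit_same ysol_def)

lemma x2sol_same: "x2sol A f g n n \<xi> \<eta> = \<xi>"
  by (simp add: x2sol_def orbit_same)

lemma x2sol_step: "x2sol A f g (k + 1) n \<xi> \<eta> = step k (ysol g k n \<eta>) (x2sol A f g k n \<xi> \<eta>)"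
proof -
  obtain x y where xy: "orbit (coupled_step A f g) k n (\<xi>, \<eta>) = (x, y)" by fastforce
  with snd_orbit_coupled_step[of k n \<xi> \<eta>] show ?thesis
    unfolding x2sol_def orbit_step[OF bij_coupled_step] xy by (simp add: coupled_step_def step_def)
qed

lemma x2sol_eq_inv_step: "x2sol A f g k n \<xi> \<eta> = inv (step k (ysol g k n \<eta>)) (x2sol A f g (k + 1) n \<xi> \<eta>)"
  unfolding x2sol_step by (simp add: bij_step bij_is_inj)

text \<open>The factors are the derivative bounds of one forward step and of one inverse step, as in
  J_n and K_n respectively.\<close>
definition x2sol_growth :: "int \<Rightarrow> int \<Rightarrow> real" where
  "x2sol_growth n k = (if n \<le> k then (\<Prod>j\<in>{n..<k}. norm (A j) + \<gamma> j)
     else (\<Prod>j\<in>{k..<n}. norm (blinv (A j)) / (1 - \<gamma> j * norm (blinv (A j)))))"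

lemma x2sol_growth_nonneg: "0 \<le> x2sol_growth n k"
proof -
  have "0 \<le> norm (blinv (A j)) / (1 - \<gamma> j * norm (blinv (A j)))" for j
    using inv_A_\<gamma>_less_1[of j] by (simp add: mult.commute)
  then show ?thesis
    unfolding x2sol_growth_def using \<gamma>_nonneg by (auto intro!: prod_nonneg add_nonneg_nonneg)
qed

lemma C1_bounded_x2sol: "C1_bounded (\<lambda>\<xi>. x2sol A f g k n \<xi> \<eta>) (x2sol_growth n k)"
proof (induction k rule: int_induct[where k=n])
  case base
  have "C1_bounded (blinfun_apply id_blinfun) 1"
    using C1_bounded_blinfun norm_blinfun_id_le by (rule C1_bounded_mono)
  then show ?case by (simp add: x2sol_same x2sol_growth_def)
next
  case (step1 i)
  have "{n..<i + 1} = insert i {n..<i}" using step1.hyps by auto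
  then have "x2sol_growth n (i + 1) = (norm (A i) + \<gamma> i) * x2sol_growth n i"
    using step1.hyps by (simp add: x2sol_growth_def)
  then show ?case
    unfolding x2sol_step using C1_bounded_compose[OF C1_bounded_step step1.IH] by simp
next
  case (step2 i)
  have "{i - 1..<n} = insert (i - 1) {i..<n}" using step2.hyps by auto
  then have "x2sol_growth n (i - 1) = norm (blinv (A (i - 1))) / (1 - \<gamma> (i - 1) * norm (blinv (A (i - 1))))
      * x2sol_growth n i"
    using step2.hyps by (auto simp: x2sol_growth_def)
  then show ?case
    using C1_bounded_compose[OF C1_bounded_inv_step step2.IH]
    by (subst x2sol_eq_inv_step) simp
qed

end

section \<open>The conjugacy\<close>

lemma C1_map_Pair_const:
  fixes G :: "'a::real_normed_vector \<Rightarrow> 'b::real_normed_vector" and y :: "'c::real_normed_vector"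
  assumes "C1_map G"
  shows "C1_map (\<lambda>x. (G x, y))"
proof -
  obtain D where deriv: "\<And>x. (G has_derivative blinfun_apply (D x)) (at x)" and cont: "continuous_on UNIV D"
    using assms unfolding C1_map_def by blast
  define J :: "'b \<Rightarrow>\<^sub>L ('b \<times> 'c)" where "J = Blinfun (\<lambda>v. (v, 0))"
  have J: "blinfun_apply J = (\<lambda>v. (v, 0))"
    unfolding J_def by (rule bounded_linear_Blinfun_apply)
      (intro bounded_linear_Pair bounded_linear_ident bounded_linear_zero)
  have "((\<lambda>x. (G x, y)) has_derivative blinfun_apply (J o\<^sub>L D x)) (at x)" for x
  proof -
    have "blinfun_apply (J o\<^sub>L D x) = (\<lambda>v. (D x v, 0))" by (rule ext) (simp add: J)
    then show ?thesis using has_derivative_Pair[OF deriv has_derivative_const] by simp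
  qed
  moreover have "continuous_on UNIV (\<lambda>x. J o\<^sub>L D x)" using cont by (intro continuous_intros)
  ultimately show ?thesis unfolding C1_map_def by (intro exI[of _ "\<lambda>x. J o\<^sub>L D x"]) simp
qed

lemma inv_fiberwise:
  assumes "\<And>y. bij (F y)"
  shows "inv (\<lambda>(x, y). (F y x, y)) (\<xi>, \<eta>) = (inv (F \<eta>) \<xi>, \<eta>)"
proof (rule inv_f_eq)
  show "inj (\<lambda>(x, y). (F y x, y))"
    using assms by (auto intro!: injI simp: bij_is_inj inj_eq)
  show "(\<lambda>(x, y). (F y x, y)) (inv (F \<eta>) \<xi>, \<eta>) = (\<xi>, \<eta>)"
    using assms by (simp add: bij_is_surj surj_f_inv_f)
qed

lemma summable_on_shifted_weight:
  fixes G :: "int \<Rightarrow> int \<Rightarrow> ('a::real_normed_vector \<Rightarrow>\<^sub>L 'a)"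
  assumes bounded: "(SUP m. \<Sum>\<^sub>\<infinity>k. ennreal (norm (G m k) * w (k - 1))) < \<infinity>"
    and "\<And>k. 0 \<le> w k"
  shows "(\<lambda>k. norm (G n (k + 1)) * w k) summable_on UNIV"
proof (rule ennreal_infsum_lt_top(1))
  show "0 \<le> norm (G n (k + 1)) * w k" for k using assms(2) by simp
  have "surj (\<lambda>k::int. k + 1)" by (metis surj_def diff_add_cancel)
  then have "(\<Sum>\<^sub>\<infinity>k. ennreal (norm (G n (k + 1)) * w k)) = (\<Sum>\<^sub>\<infinity>k. ennreal (norm (G n k) * w (k - 1)))"
    using infsum_reindex[of "\<lambda>k::int. k + 1" UNIV "\<lambda>k. ennreal (norm (G n k) * w (k - 1))"]
    by (simp add: comp_def)
  also have "\<dots> \<le> (SUP m. \<Sum>\<^sub>\<infinity>k. ennreal (norm (G m k) * w (k - 1)))"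
    by (rule SUP_upper) simp
  also have "\<dots> < top" using bounded by simp
  finally show "(\<Sum>\<^sub>\<infinity>k. ennreal (norm (G n (k + 1)) * w k)) < top" .
qed

context coupled_system
begin

lemma C1_bounded_hbar:
  fixes P :: "int \<Rightarrow> ('a \<Rightarrow>\<^sub>L 'a)" and \<mu> :: "int \<Rightarrow> real"
  assumes f_bound: "\<And>k x y. norm (f k x y) \<le> \<mu> k"
    and \<mu>_summable: "(\<lambda>k. norm (green A P n (k + 1)) * \<mu> k) summable_on UNIV"
    and \<gamma>_summable: "(\<lambda>k. norm (green A P n (k + 1)) * \<gamma> k * x2sol_growth n k) summable_on UNIV"
  shows "C1_bounded (\<lambda>\<xi>. hbar A P f g n (\<xi>, \<eta>))
      (\<Sum>\<^sub>\<infinity>k. norm (green A P n (k + 1)) * \<gamma> k * x2sol_growth n k)"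
proof -
  define t where "t k = (\<lambda>\<xi>. green A P n (k + 1) (f k (x2sol A f g k n \<xi> \<eta>) (ysol g k n \<eta>)))" for k
  have "C1_bounded (t k) (norm (green A P n (k + 1)) * \<gamma> k * x2sol_growth n k)" for k
    using C1_bounded_compose[OF C1_bounded_blinfun[of "green A P n (k + 1)"]
        C1_bounded_compose[OF C1_bounded_f[of k "ysol g k n \<eta>"] C1_bounded_x2sol[of k n \<eta>]]]
    by (simp add: t_def mult.assoc)
  moreover have "norm (t k \<xi>) \<le> norm (green A P n (k + 1)) * \<mu> k" for k \<xi>
    unfolding t_def by (rule order_trans[OF norm_blinfun mult_left_mono[OF f_bound norm_ge_zero]])
  ultimately have "C1_bounded (\<lambda>\<xi>. \<Sum>\<^sub>\<infinity>k. t k \<xi>) (\<Sum>\<^sub>\<infinity>k. norm (green A P n (k + 1)) * \<gamma> k * x2sol_growth n k)"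
    by (rule C1_bounded_infsum[OF _ \<gamma>_summable _ \<mu>_summable])
  then show ?thesis
    unfolding t_def hbar_def by (simp add: C1_bounded_uminus)
qed

lemma infsum_growth_weights:
  "(\<Sum>\<^sub>\<infinity>k. ennreal (norm (green A P n (k + 1)) * \<gamma> k * x2sol_growth n k))
    = Kconst A P \<gamma> n + Jconst A P \<gamma> n + ennreal (norm (green A P n (n + 1)) * \<gamma> n)"
proof -
  define w where "w k = ennreal (norm (green A P n (k + 1)) * \<gamma> k * x2sol_growth n k)" for k
  have split: "(UNIV :: int set) = {..<n} \<union> ({n<..} \<union> {n})" by auto
  have "(\<Sum>\<^sub>\<infinity>k. w k) = (\<Sum>\<^sub>\<infinity>k\<in>{..<n}. w k) + (\<Sum>\<^sub>\<infinity>k\<in>{n<..} \<union> {n}. w k)"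
    unfolding split by (rule infsum_Un_disjoint) (auto intro: nonneg_summable_on_complete)
  also have "(\<Sum>\<^sub>\<infinity>k\<in>{n<..} \<union> {n}. w k) = (\<Sum>\<^sub>\<infinity>k\<in>{n<..}. w k) + (\<Sum>\<^sub>\<infinity>k\<in>{n}. w k)"
    by (rule infsum_Un_disjoint) (auto intro: nonneg_summable_on_complete)
  also have "(\<Sum>\<^sub>\<infinity>k\<in>{..<n}. w k) = Kconst A P \<gamma> n"
    unfolding Kconst_def by (rule infsum_cong) (simp add: w_def x2sol_growth_def)
  also have "(\<Sum>\<^sub>\<infinity>k\<in>{n<..}. w k) = Jconst A P \<gamma> n"
    unfolding Jconst_def by (rule infsum_cong) (simp add: w_def x2sol_growth_def)
  also have "(\<Sum>\<^sub>\<infinity>k\<in>{n}. w k) = ennreal (norm (green A P n (n + 1)) * \<gamma> n)"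
    by (simp add: w_def x2sol_growth_def)
  finally show ?thesis unfolding w_def by (simp add: add.assoc)
qed

end

theorem mainTheorem3:
  fixes A P :: "int \<Rightarrow> ('a::banach \<Rightarrow>\<^sub>L 'a)"
    and f :: "int \<Rightarrow> 'a \<Rightarrow> 'b::banach \<Rightarrow> 'a"
    and g :: "int \<Rightarrow> 'b \<Rightarrow> 'b"
    and \<mu> \<gamma> :: "int \<Rightarrow> real"
    and n :: int
  assumes A_inv: "\<forall>k. bl_invertible (A k)"
    and g_homeo: "\<forall>k. \<exists>g'. homeomorphism UNIV UNIV (g k) g'"
    and BC1_nonneg: "\<forall>k. 0 \<le> \<mu> k \<and> 0 \<le> \<gamma> k"
    and BC1_bound: "\<forall>k x y. norm (f k x y) \<le> \<mu> k"
    and BC1_lip: "\<forall>k x1 x2 y. norm (f k x1 y - f k x2 y) \<le> \<gamma> k * norm (x1 - x2)"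
    and BC2: "(SUP m. \<Sum>\<^sub>\<infinity>k\<in>(UNIV::int set). ennreal (norm (green A P m k) * \<mu> (k - 1))) < \<infinity>"
    and BC3: "(SUP m. \<Sum>\<^sub>\<infinity>k\<in>(UNIV::int set). ennreal (norm (green A P m k) * \<gamma> (k - 1))) < 1"
    and BC4: "\<forall>k. norm (blinv (A k)) * \<gamma> k < 1"
    and AC1: "\<forall>k y. C1_map (\<lambda>x. f k x y)"
    and cond: "Kconst A P \<gamma> n + Jconst A P \<gamma> n + ennreal (norm (green A P n (n + 1)) * \<gamma> n) < 1"
  shows "\<forall>\<eta>. C1_map (\<lambda>\<xi>. Hconj A P f g n (\<xi>, \<eta>))"
proof
  fix \<eta> :: 'b
  interpret coupled_system A f g \<gamma>
  proof
    show "bij (g k)" for k using g_homeo bij_if_homeomorphism by blast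
  qed (use A_inv BC1_nonneg BC1_lip BC4 AC1 in simp_all)
  define b where "b k = norm (green A P n (k + 1)) * \<gamma> k * x2sol_growth n k" for k
  have b_nonneg: "0 \<le> b k" for k
    using BC1_nonneg x2sol_growth_nonneg by (simp add: b_def)
  have b_lt_1: "(\<Sum>\<^sub>\<infinity>k. ennreal (b k)) < 1"
    using cond unfolding b_def infsum_growth_weights .
  then have "(\<Sum>\<^sub>\<infinity>k. ennreal (b k)) < top"
    by (rule order.strict_trans) simp
  note b = ennreal_infsum_lt_top[OF b_nonneg this]
  have "infsum b UNIV < 1"
    using b_lt_1 unfolding b(2)[symmetric] by simp
  have hbar_C1: "C1_bounded (\<lambda>\<xi>. hbar A P f g n (\<xi>, y)) (infsum b UNIV)" for y
    unfolding b_def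
    by (rule C1_bounded_hbar[OF _ summable_on_shifted_weight[OF BC2] b(1)[unfolded b_def]])
      (use BC1_bound BC1_nonneg in auto)
  have "bij (\<lambda>\<xi>. \<xi> + hbar A P f g n (\<xi>, y))" for y
    by (rule bij_perturbed_identity[OF C1_bounded_nonneg[OF hbar_C1] \<open>infsum b UNIV < 1\<close>
          C1_bounded_lipschitz[OF hbar_C1]])
  then have "Hconj A P f g n (\<xi>, \<eta>) = (inv (\<lambda>\<xi>. \<xi> + hbar A P f g n (\<xi>, \<eta>)) \<xi>, \<eta>)" for \<xi>
    unfolding Hconj_def Hbar_def by (rule inv_fiberwise)
  then show "C1_map (\<lambda>\<xi>. Hconj A P f g n (\<xi>, \<eta>))"
    using C1_map_Pair_const[OF C1_bounded_imp_C1_map[OF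
          C1_bounded_inv_perturbed_identity[OF \<open>infsum b UNIV < 1\<close> hbar_C1]]] by simp
qed

end
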